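(* For every Johnson graph $J(m,k)$ (with $m,k\in\mathbb N$, $k\le m$), the VC-dimension of the edge relation on $J(m,k)$ is at most $4$.
   Context: For $m\ge k$ and a set $X$ with $|X|=m$, the Johnson graph $J(m,k)$ has as vertices the $k$-element subsets of $X$, two vertices adjacent iff their intersection has size $k-1$. The VC-dimension of the edge relation on a graph $G$ is the VC-dimension of the set system $(V(G),\{N(v)\mid v\in V(G)\})$, where $N(v)$ is the set of vertices adjacent to $v$; i.e. the largest size of a set $A\subseteq V(G)$ such that $\{A\cap N(v)\mid v\in V(G)\}$ equals the power set of $A$. *)

theory Defs
  imports Main "HOL-Library.Extended_Nat"
begin

definition nbhd :: "'v set \<Rightarrow> ('v \<Rightarrow> 'v \<Rightarrow> bool) \<Rightarrow> 'v \<Rightarrow> 'v set" where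
  "nbhd V E v = {u \<in> V. E v u}"

definition shatters :: "'v set set \<Rightarrow> 'v set \<Rightarrow> bool" where
  "shatters F A \<longleftrightarrow> {A \<inter> S | S. S \<in> F} = Pow A"

definition vc_dim :: "'v set \<Rightarrow> 'v set set \<Rightarrow> enat" where
  "vc_dim V F = Sup {enat (card A) | A. A \<subseteq> V \<and> finite A \<and> shatters F A}"

definition edge_vc_dim :: "'v set \<Rightarrow> ('v \<Rightarrow> 'v \<Rightarrow> bool) \<Rightarrow> enat" where
  "edge_vc_dim V E = vc_dim V (nbhd V E ` V)"

text \<open>Johnson graph J(X,k): vertices are the k-subsets of X, adjacent iff they meet in k-1 elements.
  (Written as card + 1 = k to avoid truncated subtraction on nat.)\<close>
definition johnson_vertices :: "'a set \<Rightarrow> nat \<Rightarrow> 'a set set" where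
  "johnson_vertices X k = {A. A \<subseteq> X \<and> card A = k}"

definition johnson_adj :: "nat \<Rightarrow> 'a set \<Rightarrow> 'a set \<Rightarrow> bool" where
  "johnson_adj k A B \<longleftrightarrow> card (A \<inter> B) + 1 = k"

end

theory Submission
  imports Defs
begin

(* Suppose five vertices A of J(m,k) were shattered by the neighbourhoods. Some vertex v is
   adjacent to all of A, so every member of A arises from v by exchanging one element.
   Shattering gives any two members of A 2^3 = 8 common neighbours, whereas two k-sets at
   distance two have only four; hence any two members of A agree in the removed or in the
   added element, and then all of A lies in one maximal clique: the k-sets containing a fixed
   (k-1)-set c, or the k-subsets of a fixed (k+1)-set D. A vertex adjacent to three members of
   such a clique contains c, resp. lies in D, and is therefore equal or adjacent to every
   member. So the vertex whose neighbourhood meets A in exactly three members would have to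
   coincide with both remaining members. *)

lemma shattersD:
  assumes "shatters F A" "T \<subseteq> A"
  obtains S where "S \<in> F" "A \<inter> S = T"
proof -
  have "T \<in> {A \<inter> S | S. S \<in> F}" using assms unfolding shatters_def by simp
  then show ?thesis using that by blast
qed

lemma shatters_subset:
  assumes "shatters F A" "B \<subseteq> A"
  shows "shatters F B"
  unfolding shatters_def
proof (intro equalityI subsetI)
  fix T assume "T \<in> Pow B"
  then have "T \<subseteq> A" using assms(2) by blast
  then obtain S where "S \<in> F" and S: "A \<inter> S = T" by (rule shattersD[OF assms(1)])
  have "B \<inter> S = B \<inter> (A \<inter> S)" using assms(2) by blast
  also have "\<dots> = T" unfolding S using \<open>T \<in> Pow B\<close> by blast
  finally show "T \<in> {B \<inter> S | S. S \<in> F}" using \<open>S \<in> F\<close> by blast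
qed auto

lemma vc_dim_le:
  assumes "\<And>A. A \<subseteq> V \<Longrightarrow> card A = Suc n \<Longrightarrow> \<not> shatters F A"
  shows "vc_dim V F \<le> enat n"
  unfolding vc_dim_def
proof (rule Sup_least, clarify)
  fix A assume A: "A \<subseteq> V" "finite A" "shatters F A"
  show "enat (card A) \<le> enat n"
  proof (rule ccontr)
    assume "\<not> enat (card A) \<le> enat n"
    then have "Suc n \<le> card A" by simp
    then obtain A' where "A' \<subseteq> A" "card A' = Suc n"
      by (rule obtain_subset_with_card_n)
    moreover have "shatters F A'" using shatters_subset[OF A(3) \<open>A' \<subseteq> A\<close>] .
    ultimately show False using assms A(1) by blast
  qed
qed

lemma shatters_nbhd_realises:
  assumes "shatters (nbhd V E ` V) A" "A \<subseteq> V" "T \<subseteq> A"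
  shows "\<exists>w\<in>V. \<forall>u\<in>A. E w u \<longleftrightarrow> u \<in> T"
proof -
  obtain w where "w \<in> V" "A \<inter> nbhd V E w = T" using assms(1,3) by (auto elim: shattersD)
  then show ?thesis using assms(2) unfolding nbhd_def by blast
qed

lemma shatters_nbhd_card_common_neighbours:
  assumes "shatters (nbhd V E ` V) A" "A \<subseteq> V" "finite V" "B \<in> A" "C \<in> A" "B \<noteq> C"
  shows "2 ^ (card A - 2) \<le> card {w \<in> V. E w B \<and> E w C}"
proof -
  let ?W = "{w \<in> V. E w B \<and> E w C}"
  have "Pow (A - {B, C}) \<subseteq> (\<lambda>w. {u \<in> A - {B, C}. E w u}) ` ?W"
  proof
    fix T assume T: "T \<in> Pow (A - {B, C})"
    then have "insert B (insert C T) \<subseteq> A" using assms(4,5) by blast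
    then obtain w where "w \<in> V" and w: "\<forall>u\<in>A. E w u \<longleftrightarrow> u \<in> insert B (insert C T)"
      using shatters_nbhd_realises[OF assms(1,2)] by blast
    then have "w \<in> ?W" "T = {u \<in> A - {B, C}. E w u}" using T assms(4,5) by auto
    then show "T \<in> (\<lambda>w. {u \<in> A - {B, C}. E w u}) ` ?W" by blast
  qed
  then have "card (Pow (A - {B, C})) \<le> card ((\<lambda>w. {u \<in> A - {B, C}. E w u}) ` ?W)"
    using assms(3) by (intro card_mono) auto
  also have "\<dots> \<le> card ?W"
    using assms(3) by (intro card_image_le) auto
  finally have "card (Pow (A - {B, C})) \<le> card ?W" .
  moreover have "card (A - {B, C}) = card A - 2"
    using assms finite_subset[OF assms(2,3)] by (simp add: card_Diff_subset)
  ultimately show ?thesis using finite_subset[OF assms(2,3)] by (simp add: card_Pow)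
qed

lemma pairwise_share_coordinate:
  assumes share: "\<And>x y. x \<in> S \<Longrightarrow> y \<in> S \<Longrightarrow> f x = f y \<or> g x = g y"
  shows "(\<forall>x\<in>S. \<forall>y\<in>S. f x = f y) \<or> (\<forall>x\<in>S. \<forall>y\<in>S. g x = g y)"
proof (rule ccontr)
  assume "\<not> ?thesis"
  then obtain x y x' y' where "x \<in> S" "y \<in> S" "f x \<noteq> f y" "x' \<in> S" "y' \<in> S" "g x' \<noteq> g y'"
    by blast
  then show False using share by metis
qed

lemma card_Diff_commute:
  assumes "finite A" "finite B" "card A = card B"
  shows "card (A - B) = card (B - A)"
  using assms card_le_sym_Diff[of A B] card_le_sym_Diff[of B A] by simp

lemma card_Diff_exchange:
  assumes "a \<in> v" "a' \<in> v" "b \<notin> v" "b' \<notin> v" "a \<noteq> a'" "b \<noteq> b'"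
  shows "card (insert b (v - {a}) - insert b' (v - {a'})) = 2"
proof -
  have "insert b (v - {a}) - insert b' (v - {a'}) = {b, a'}" using assms by blast
  moreover have "b \<noteq> a'" using assms by blast
  ultimately show ?thesis by simp
qed

lemma johnson_verticesD:
  assumes "finite X" "A \<in> johnson_vertices X k"
  shows "finite A" "card A = k"
  using assms finite_subset unfolding johnson_vertices_def by auto

lemma finite_johnson_vertices: "finite X \<Longrightarrow> finite (johnson_vertices X k)"
  unfolding johnson_vertices_def by simp

lemma johnson_adj_iff_card_Diff:
  assumes "finite A" "card A = k"
  shows "johnson_adj k A B \<longleftrightarrow> card (A - B) = 1"
  using assms card_Int_Diff[of A B] unfolding johnson_adj_def by auto

lemma johnson_adj_card_Diff:
  assumes "finite X" "A \<in> johnson_vertices X k" "B \<in> johnson_vertices X k" "johnson_adj k A B"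
  shows "card (A - B) = 1" "card (B - A) = 1"
proof -
  have "finite A" "card A = k" "finite B" "card B = k"
    using johnson_verticesD assms(1-3) by blast+
  then show "card (A - B) = 1" "card (B - A) = 1"
    using assms(4) johnson_adj_iff_card_Diff card_Diff_commute by metis+
qed

lemma johnson_eq_or_adj:
  assumes "finite A" "finite B" "card A = k" "card B = k" "k \<le> card (A \<inter> B) + 1"
  shows "A = B \<or> johnson_adj k A B"
proof (cases "card (A \<inter> B) = k")
  case True
  then have "A \<inter> B = A" "A \<inter> B = B"
    using assms card_seteq[of A "A \<inter> B"] card_seteq[of B "A \<inter> B"] by auto
  then show ?thesis by simp
next
  case False
  moreover have "card (A \<inter> B) \<le> k" using assms card_mono[of A "A \<inter> B"] by simp
  ultimately show ?thesis using assms(5) unfolding johnson_adj_def by linarith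
qed

lemma johnson_eq_or_adj_of_common_subset:
  assumes "finite A" "finite B" "card A = k" "card B = k" "c \<subseteq> A" "c \<subseteq> B" "card c + 1 = k"
  shows "A = B \<or> johnson_adj k A B"
proof (rule johnson_eq_or_adj[OF assms(1-4)])
  have "card c \<le> card (A \<inter> B)" using assms by (intro card_mono) auto
  then show "k \<le> card (A \<inter> B) + 1" using assms(7) by simp
qed

lemma johnson_eq_or_adj_of_common_superset:
  assumes "finite D" "A \<subseteq> D" "B \<subseteq> D" "card A = k" "card B = k" "card D = k + 1"
  shows "A = B \<or> johnson_adj k A B"
proof (rule johnson_eq_or_adj)
  show "finite A" "finite B" using assms finite_subset by blast+
  moreover have "card (A \<union> B) \<le> card D" using assms by (intro card_mono) auto
  ultimately show "k \<le> card (A \<inter> B) + 1" using assms card_Un_Int[of A B] by simp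
qed (use assms in auto)

lemma johnson_adj_exchange:
  assumes "finite v" "finite B" "card v = k" "card B = k" "johnson_adj k v B"
  obtains a b where "a \<in> v" "b \<notin> v" "B = insert b (v - {a})"
proof -
  have "card (v - B) = 1" using assms johnson_adj_iff_card_Diff by blast
  then obtain a where a: "v - B = {a}" by (rule card_1_singletonE)
  have "card (B - v) = 1" using card_Diff_commute[of B v] \<open>card (v - B) = 1\<close> assms(1-4) by simp
  then obtain b where b: "B - v = {b}" by (rule card_1_singletonE)
  have "B = (v - (v - B)) \<union> (B - v)" by blast
  then have "B = insert b (v - {a})" unfolding a b by simp
  moreover have "a \<in> v" "b \<notin> v" using a b by auto
  ultimately show ?thesis using that by blast
qed

lemma johnson_common_neighbours_dist2:
  assumes "finite X" "B \<in> johnson_vertices X k" "C \<in> johnson_vertices X k" "card (B - C) = 2"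
  shows "{w \<in> johnson_vertices X k. johnson_adj k w B \<and> johnson_adj k w C}
    \<subseteq> (\<lambda>(a, b). insert b (B - {a})) ` ((B - C) \<times> (C - B))"
proof
  fix w assume "w \<in> {w \<in> johnson_vertices X k. johnson_adj k w B \<and> johnson_adj k w C}"
  then have "w \<in> johnson_vertices X k" "johnson_adj k w B" "johnson_adj k w C" by simp_all
  then have "card (B - w) = 1" "card (w - B) = 1" "card (C - w) = 1" "card (w - C) = 1"
    using johnson_adj_card_Diff[OF assms(1)] assms(2,3) by blast+
  then obtain a b p q where a: "B - w = {a}" and b: "w - B = {b}"
    and p: "w - C = {p}" and q: "C - w = {q}"
    by (meson card_1_singletonE)
  have "card (C - B) = 2"
    using card_Diff_commute[of B C] johnson_verticesD[OF assms(1)] assms(2-4) by simp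
  have "B - C \<subseteq> (B - w) \<union> (w - C)" "C - B \<subseteq> (C - w) \<union> (w - B)" by blast+
  then have BC: "B - C \<subseteq> {a, p}" and CB: "C - B \<subseteq> {q, b}"
    unfolding a b p q by (simp_all add: insert_commute)
  have "a \<in> B - C"
  proof (rule ccontr)
    assume "a \<notin> B - C"
    then have "card (B - C) \<le> card {p}" using BC by (intro card_mono) auto
    then show False using assms(4) by simp
  qed
  moreover have "b \<in> C - B"
  proof (rule ccontr)
    assume "b \<notin> C - B"
    then have "card (C - B) \<le> card {q}" using CB by (intro card_mono) auto
    then show False using \<open>card (C - B) = 2\<close> by simp
  qed
  moreover have "w = (B - (B - w)) \<union> (w - B)" by blast
  then have "w = insert b (B - {a})" unfolding a b by simp
  ultimately show "w \<in> (\<lambda>(a, b). insert b (B - {a})) ` ((B - C) \<times> (C - B))" by force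
qed

lemma johnson_card_common_neighbours_dist2:
  assumes "finite X" "B \<in> johnson_vertices X k" "C \<in> johnson_vertices X k" "card (B - C) = 2"
  shows "card {w \<in> johnson_vertices X k. johnson_adj k w B \<and> johnson_adj k w C} \<le> 4"
proof -
  let ?P = "(B - C) \<times> (C - B)"
  have "finite B" "finite C"
    using johnson_verticesD[OF assms(1)] assms(2,3) by blast+
  moreover have "card (C - B) = 2"
    using card_Diff_commute[of B C] johnson_verticesD[OF assms(1)] assms(2-4) by simp
  ultimately have fin: "finite ?P" and "card ?P = 4"
    using assms(4) by (simp_all add: card_cartesian_product)
  have "card {w \<in> johnson_vertices X k. johnson_adj k w B \<and> johnson_adj k w C}
      \<le> card ((\<lambda>(a, b). insert b (B - {a})) ` ?P)"
    using johnson_common_neighbours_dist2[OF assms] fin by (intro card_mono) auto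
  also have "\<dots> \<le> card ?P" using fin by (rule card_image_le)
  finally show ?thesis using \<open>card ?P = 4\<close> by simp
qed

definition one_point_extensions :: "'a set \<Rightarrow> 'a set set" where
  "one_point_extensions c = {insert b c | b. b \<notin> c}"

definition one_point_deletions :: "'a set \<Rightarrow> 'a set set" where
  "one_point_deletions D = {D - {a} | a. a \<in> D}"

lemma one_point_extensionsE:
  assumes "B \<in> one_point_extensions c"
  obtains b where "b \<notin> c" "B = insert b c"
  using assms unfolding one_point_extensions_def by blast

lemma one_point_deletionsE:
  assumes "B \<in> one_point_deletions D"
  obtains a where "a \<in> D" "B = D - {a}"
  using assms unfolding one_point_deletions_def by blast

definition in_maximal_clique :: "nat \<Rightarrow> 'a set set \<Rightarrow> bool" where
  "in_maximal_clique k F \<longleftrightarrow>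
    (\<exists>c. finite c \<and> k = Suc (card c) \<and> F \<subseteq> one_point_extensions c) \<or>
    (\<exists>D. finite D \<and> card D = Suc k \<and> F \<subseteq> one_point_deletions D)"

lemma johnson_neighbours_in_maximal_clique:
  assumes "finite v" "A \<noteq> {}"
    and nb: "\<And>B. B \<in> A \<Longrightarrow> finite B \<and> card B = card v \<and> johnson_adj (card v) v B"
    and not_dist2: "\<And>B C. B \<in> A \<Longrightarrow> C \<in> A \<Longrightarrow> card (B - C) \<noteq> 2"
  shows "in_maximal_clique (card v) A"
proof -
  define f where "f B = the_elem (v - B)" for B
  define g where "g B = the_elem (B - v)" for B
  have param: "\<exists>a b. a \<in> v \<and> b \<notin> v \<and> B = insert b (v - {a}) \<and> f B = a \<and> g B = b"
    if B: "B \<in> A" for B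
  proof -
    obtain a b where "a \<in> v" "b \<notin> v" "B = insert b (v - {a})"
      using johnson_adj_exchange[OF assms(1) _ refl] nb[OF B] by blast
    moreover from this have "v - B = {a}" "B - v = {b}" by auto
    ultimately show ?thesis unfolding f_def g_def by simp
  qed
  have "f B = f C \<or> g B = g C" if "B \<in> A" "C \<in> A" for B C
    using param[OF that(1)] param[OF that(2)] not_dist2[OF that] card_Diff_exchange by metis
  then have "(\<forall>B\<in>A. \<forall>C\<in>A. f B = f C) \<or> (\<forall>B\<in>A. \<forall>C\<in>A. g B = g C)"
    by (rule pairwise_share_coordinate)
  moreover obtain B0 where "B0 \<in> A" using assms(2) by blast
  ultimately show ?thesis
  proof (elim disjE)
    assume f_const: "\<forall>B\<in>A. \<forall>C\<in>A. f B = f C"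
    define c where "c = v - {f B0}"
    have "B \<in> one_point_extensions c" if B: "B \<in> A" for B
    proof -
      obtain a b where "b \<notin> v" "B = insert b (v - {a})" "f B = a"
        using param[OF B] by blast
      moreover have "f B = f B0" using f_const B \<open>B0 \<in> A\<close> by blast
      ultimately show ?thesis unfolding one_point_extensions_def c_def by auto
    qed
    moreover have "f B0 \<in> v" using param[OF \<open>B0 \<in> A\<close>] by auto
    then have "card v = Suc (card c)" unfolding c_def by (rule card_Suc_Diff1[OF assms(1), symmetric])
    moreover have "finite c" using assms(1) unfolding c_def by simp
    ultimately show ?thesis unfolding in_maximal_clique_def by blast
  next
    assume g_const: "\<forall>B\<in>A. \<forall>C\<in>A. g B = g C"
    define D where "D = insert (g B0) v"
    have "B \<in> one_point_deletions D" if B: "B \<in> A" for B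
    proof -
      obtain a b where "a \<in> v" "b \<notin> v" "B = insert b (v - {a})" "g B = b"
        using param[OF B] by blast
      moreover have "g B = g B0" using g_const B \<open>B0 \<in> A\<close> by blast
      ultimately have "a \<in> D" "B = D - {a}" unfolding D_def by auto
      then show ?thesis unfolding one_point_deletions_def by blast
    qed
    moreover have "card D = Suc (card v)"
      using param[OF \<open>B0 \<in> A\<close>] assms(1) unfolding D_def by auto
    moreover have "finite D" using assms(1) unfolding D_def by simp
    ultimately show ?thesis unfolding in_maximal_clique_def by blast
  qed
qed

lemma johnson_adj_three_extensions_subset:
  assumes "finite c" "finite w" "card w = Suc (card c)"
    and "{B1, B2, B3} \<subseteq> one_point_extensions c" "distinct [B1, B2, B3]"
    and "johnson_adj (card w) w B1" "johnson_adj (card w) w B2" "johnson_adj (card w) w B3"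
  shows "c \<subseteq> w"
proof
  obtain b1 b2 b3 where b: "b1 \<notin> c" "b2 \<notin> c" "b3 \<notin> c"
    and B: "B1 = insert b1 c" "B2 = insert b2 c" "B3 = insert b3 c"
  proof -
    have "B1 \<in> one_point_extensions c" "B2 \<in> one_point_extensions c" "B3 \<in> one_point_extensions c"
      using assms(4) by simp_all
    then show ?thesis using that by (elim one_point_extensionsE) blast
  qed
  have "distinct (map (\<lambda>b. insert b c) [b1, b2, b3])" using assms(5) unfolding B by (simp only: list.map)
  then have "distinct [b1, b2, b3]" by (rule distinct_map[THEN iffD1, THEN conjunct1])
  fix t assume "t \<in> c"
  show "t \<in> w"
  proof (rule ccontr)
    assume "t \<notin> w"
    have "insert b c - {t} \<subseteq> w" if "b \<notin> c" "johnson_adj (card w) w (insert b c)" for b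
    proof -
      have "w \<inter> insert b c \<subseteq> insert b c - {t}" using \<open>t \<notin> w\<close> by blast
      moreover have "card (insert b c - {t}) \<le> card (w \<inter> insert b c)"
        using that assms(1,3) \<open>t \<in> c\<close> unfolding johnson_adj_def by simp
      ultimately have "w \<inter> insert b c = insert b c - {t}"
        using assms(1) by (intro card_seteq) auto
      then show ?thesis by (metis Int_lower1)
    qed
    then have "insert b1 (insert b2 (insert b3 (c - {t}))) \<subseteq> w"
      using b assms(6-8) \<open>t \<in> c\<close> unfolding B by blast
    then have "card (insert b1 (insert b2 (insert b3 (c - {t})))) \<le> card w"
      using assms(2) by (rule card_mono[rotated])
    then show False
      using assms(1,3) b \<open>distinct [b1, b2, b3]\<close> \<open>t \<in> c\<close> by (simp add: card_Diff_singleton)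
  qed
qed

lemma johnson_adj_three_deletions_subset:
  assumes "finite D" "finite w" "card D = Suc (card w)"
    and "{B1, B2, B3} \<subseteq> one_point_deletions D" "distinct [B1, B2, B3]"
    and "johnson_adj (card w) w B1" "johnson_adj (card w) w B2" "johnson_adj (card w) w B3"
  shows "w \<subseteq> D"
proof
  obtain a1 a2 a3 where a: "a1 \<in> D" "a2 \<in> D" "a3 \<in> D"
    and B: "B1 = D - {a1}" "B2 = D - {a2}" "B3 = D - {a3}"
  proof -
    have "B1 \<in> one_point_deletions D" "B2 \<in> one_point_deletions D" "B3 \<in> one_point_deletions D"
      using assms(4) by simp_all
    then show ?thesis using that by (elim one_point_deletionsE) blast
  qed
  have "distinct (map (\<lambda>a. D - {a}) [a1, a2, a3])" using assms(5) unfolding B by (simp only: list.map)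
  then have "distinct [a1, a2, a3]" by (rule distinct_map[THEN iffD1, THEN conjunct1])
  fix t assume "t \<in> w"
  show "t \<in> D"
  proof (rule ccontr)
    assume "t \<notin> D"
    have "w - {t} \<subseteq> D - {a}" if "johnson_adj (card w) w (D - {a})" for a
    proof -
      have "w \<inter> (D - {a}) \<subseteq> w - {t}" using \<open>t \<notin> D\<close> by blast
      moreover have "card (w - {t}) \<le> card (w \<inter> (D - {a}))"
        using that assms(2) \<open>t \<in> w\<close> unfolding johnson_adj_def by simp
      ultimately have "w \<inter> (D - {a}) = w - {t}"
        using assms(2) by (intro card_seteq) auto
      then show ?thesis by (metis Int_lower2)
    qed
    then have "w - {t} \<subseteq> D - {a1, a2, a3}" using assms(6-8) unfolding B by blast
    then have "card (w - {t}) \<le> card (D - {a1, a2, a3})"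
      using assms(1) by (intro card_mono) auto
    moreover have "card {a1, a2, a3} \<le> card D" using a assms(1) by (intro card_mono) auto
    ultimately show False
      using assms(1-3) a \<open>distinct [a1, a2, a3]\<close> \<open>t \<in> w\<close> by (simp add: card_Diff_subset)
  qed
qed

lemma in_maximal_clique_common_neighbour:
  assumes "in_maximal_clique k F" "finite w" "card w = k"
    and "{B1, B2, B3} \<subseteq> F" "distinct [B1, B2, B3]"
    and "johnson_adj k w B1" "johnson_adj k w B2" "johnson_adj k w B3"
    and "B \<in> F"
  shows "w = B \<or> johnson_adj k w B"
  using assms(1) unfolding in_maximal_clique_def
proof (elim disjE exE conjE)
  fix c assume c: "finite c" "k = Suc (card c)" "F \<subseteq> one_point_extensions c"
  then have "c \<subseteq> w"
    using johnson_adj_three_extensions_subset[of c w B1 B2 B3] assms(2-8) by auto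
  moreover obtain b where "b \<notin> c" "B = insert b c"
    using c(3) assms(9) by (blast elim: one_point_extensionsE)
  then have "finite B" "card B = k" "c \<subseteq> B" using c(1,2) by auto
  ultimately show ?thesis
    using johnson_eq_or_adj_of_common_subset[OF assms(2) \<open>finite B\<close> assms(3)] c(2) by simp
next
  fix D assume D: "finite D" "card D = Suc k" "F \<subseteq> one_point_deletions D"
  then have "w \<subseteq> D"
    using johnson_adj_three_deletions_subset[of D w B1 B2 B3] assms(2-8) by auto
  moreover obtain a where "a \<in> D" "B = D - {a}"
    using D(3) assms(9) by (blast elim: one_point_deletionsE)
  then have "B \<subseteq> D" "card B = k" using D(1,2) by auto
  ultimately show ?thesis
    using johnson_eq_or_adj_of_common_superset[OF D(1) _ _ assms(3)] D(2) by simp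
qed

lemma johnson_shattered_five_in_maximal_clique:
  assumes "finite X" "A \<subseteq> johnson_vertices X k" "card A = 5"
    and sh: "shatters (nbhd (johnson_vertices X k) (johnson_adj k) ` johnson_vertices X k) A"
  shows "in_maximal_clique k A"
proof -
  let ?V = "johnson_vertices X k"
  have not_dist2: "card (B - C) \<noteq> 2" if "B \<in> A" "C \<in> A" for B C
  proof
    assume "card (B - C) = 2"
    then have "card {w \<in> ?V. johnson_adj k w B \<and> johnson_adj k w C} \<le> 4"
      using johnson_card_common_neighbours_dist2 assms(1,2) that by blast
    moreover have "B \<noteq> C" using \<open>card (B - C) = 2\<close> by auto
    then have "2 ^ (card A - 2) \<le> card {w \<in> ?V. johnson_adj k w B \<and> johnson_adj k w C}"
      using shatters_nbhd_card_common_neighbours[OF sh assms(2)] finite_johnson_vertices assms(1)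
        that by blast
    ultimately show False using assms(3) by simp
  qed
  obtain v where "v \<in> ?V" and v: "\<forall>B\<in>A. johnson_adj k v B"
    using shatters_nbhd_realises[OF sh assms(2) order_refl] by blast
  then have "finite v" "card v = k" using johnson_verticesD[OF assms(1)] by auto
  moreover have "A \<noteq> {}" using assms(3) by auto
  moreover have "finite B \<and> card B = card v \<and> johnson_adj (card v) v B" if "B \<in> A" for B
    using johnson_verticesD[OF assms(1)] assms(2) that v \<open>card v = k\<close> by auto
  ultimately show ?thesis
    using johnson_neighbours_in_maximal_clique[of v A] not_dist2 by simp
qed

lemma johnson_not_shatters_five:
  assumes "finite X" "A \<subseteq> johnson_vertices X k" "card A = 5"
  shows "\<not> shatters (nbhd (johnson_vertices X k) (johnson_adj k) ` johnson_vertices X k) A"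
proof
  let ?V = "johnson_vertices X k"
  assume sh: "shatters (nbhd ?V (johnson_adj k) ` ?V) A"
  obtain T where "T \<subseteq> A" "card T = 3" "finite T"
    using obtain_subset_with_card_n[of 3 A] assms(3) by auto
  then obtain B1 B2 B3 where T: "T = {B1, B2, B3}" and "distinct [B1, B2, B3]"
    by (auto simp: card_3_iff)
  have "card (A - T) = 2"
    using card_Diff_subset[OF \<open>finite T\<close> \<open>T \<subseteq> A\<close>] \<open>card T = 3\<close> assms(3) by simp
  then obtain B4 B5 where "A - T = {B4, B5}" "B4 \<noteq> B5" by (auto simp: card_2_iff)
  obtain w where "w \<in> ?V" and w: "\<forall>B\<in>A. johnson_adj k w B \<longleftrightarrow> B \<in> T"
    using shatters_nbhd_realises[OF sh assms(2) \<open>T \<subseteq> A\<close>] by blast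
  have "w = B \<or> johnson_adj k w B" if "B \<in> A" for B
  proof (rule in_maximal_clique_common_neighbour)
    show "in_maximal_clique k A" using johnson_shattered_five_in_maximal_clique[OF assms sh] .
    show "finite w" "card w = k" using johnson_verticesD[OF assms(1) \<open>w \<in> ?V\<close>] by auto
    show "johnson_adj k w B1" "johnson_adj k w B2" "johnson_adj k w B3"
      using w T \<open>T \<subseteq> A\<close> by auto
  qed (use T \<open>T \<subseteq> A\<close> \<open>distinct [B1, B2, B3]\<close> that in auto)
  then have "w = B4" "w = B5" using w \<open>A - T = {B4, B5}\<close> by blast+
  then show False using \<open>B4 \<noteq> B5\<close> by simp
qed

theorem mainTheorem7:
  fixes X :: "'a set" and m k :: nat
  assumes "finite X" and "card X = m" and "k \<le> m"
  shows "edge_vc_dim (johnson_vertices X k) (johnson_adj k) \<le> 4"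
proof -
  have "vc_dim (johnson_vertices X k) (nbhd (johnson_vertices X k) (johnson_adj k) ` johnson_vertices X k)
      \<le> enat 4"
    by (rule vc_dim_le) (use johnson_not_shatters_five[OF assms(1)] in auto)
  then show ?thesis by (simp add: edge_vc_dim_def numeral_eq_enat)
qed

end
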